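(* Fix $\alpha>0$ and $N\ge1$. For $u\in\mathbb{R}$ and $D>0$ define $$\tilde H(u,D)=\int_{\mathbb{R}^N}(v_1-u)\exp\left(-\frac{|v|^2}{2D}+\frac{u v_1}{D}\right)\exp\left(-\alpha\left(\frac{|v|^4}{4D}-\frac{|v|^2}{2D}\right)\right)dv,$$ where $v=(v_1,\dots,v_N)$. There exists $D_0>0$ such that $\frac{\partial \tilde H}{\partial u}(u,D)<0$ for all $u>0$ and all $D\ge D_0$. *)

theory Defs
  imports "HOL-Analysis.Analysis"
begin

text \<open>The function H-tilde(u,D) of the paper, on R^N = real^'n (N = CARD('n)).
  The index i plays the role of the first coordinate v_1.  The integral is the
  Lebesgue integral over R^N.\<close>
definition Htilde :: "real \<Rightarrow> 'n::finite \<Rightarrow> real \<Rightarrow> real \<Rightarrow> real" where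
  "Htilde \<alpha> i u D =
     (LINT v|(lborel :: (real^'n) measure).
        (v $ i - u) * exp (- (norm v ^ 2) / (2 * D) + u * (v $ i) / D)
          * exp (- \<alpha> * (norm v ^ 4 / (4 * D) - norm v ^ 2 / (2 * D))))"

end

theory Submission
  imports Defs "HOL-Probability.Distributions"
begin

(*
  Write rho_u for the weight of Htilde, so that Htilde(u) is the integral of (v_i - u) rho_u(v).
  Differentiating under the integral sign gives
    dHtilde/du = integral of (-1 + (v_i - u) v_i / D) rho_u(v).
  The integral over R^N of the derivative of v_i rho_u(v) in the direction e_i vanishes; adding it
  cancels everything except the contribution of the quartic part of the exponent, so
    dHtilde/du = -(alpha / D) * integral of v_i^2 (|v|^2 - 1) rho_u(v).
  This last integrand is negative only in the unit ball, where it is at least -rho_u(v). On the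
  unit ball translated by 3 e_i it is at least 12 rho_u, and once D >= 8 + 65 alpha the weight
  loses at most a factor e under that translation, so the translated ball outweighs the unit ball.
*)

lemma power_le_one_plus_power:
  fixes r :: real
  assumes "0 \<le> r" "j \<le> k"
  shows "r ^ j \<le> (1 + r) ^ k"
proof -
  have "r ^ j \<le> (1 + r) ^ j"
    using assms by (intro power_mono) auto
  also have "\<dots> \<le> (1 + r) ^ k"
    using assms by (intro power_increasing) auto
  finally show ?thesis .
qed

lemma abs_add_divide_le:
  fixes c X Y D :: real
  assumes "D > 0" "\<bar>X\<bar> \<le> Y"
  shows "\<bar>c + X / D\<bar> \<le> \<bar>c\<bar> + Y / D"
proof -
  have "\<bar>X\<bar> / D \<le> Y / D"
    using assms by (simp add: divide_right_mono)
  then show ?thesis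
    using abs_triangle_ineq[of c "X / D"] abs_divide[of X D] abs_of_pos[OF assms(1)] by linarith
qed

lemma linear_quadratic_minus_quartic_le:
  fixes a b c r :: real
  assumes "a > 0"
  shows "c * r + b * r\<^sup>2 - a * r ^ 4 \<le> c\<^sup>2 / 4 + (b + 2)\<^sup>2 / (4 * a) - r\<^sup>2"
proof -
  have "0 \<le> (r - c / 2)\<^sup>2" "0 \<le> (2 * a * r\<^sup>2 - (b + 2))\<^sup>2"
    by simp_all
  then have "c * r \<le> c\<^sup>2 / 4 + r\<^sup>2" and "((b + 2) * r\<^sup>2 - a * r ^ 4) * (4 * a) \<le> (b + 2)\<^sup>2"
    by (simp_all add: power2_eq_square power4_eq_xxxx algebra_simps)
  moreover from this(2) have "(b + 2) * r\<^sup>2 - a * r ^ 4 \<le> (b + 2)\<^sup>2 / (4 * a)"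
    using assms by (simp add: pos_le_divide_eq)
  ultimately show ?thesis
    using distrib_right[of b 2 "r\<^sup>2"] by linarith
qed

lemma exp_minus_norm_sq_translate_le:
  fixes v x :: "'a::real_normed_vector"
  assumes "norm x \<le> 1"
  shows "exp (- (norm (v + x))\<^sup>2) \<le> exp 1 * exp (- (norm v)\<^sup>2 / 2)"
proof -
  have "norm v \<le> norm (v + x) + 1"
    using norm_triangle_ineq4[of "v + x" x] assms by simp
  then have "(norm v)\<^sup>2 \<le> (norm (v + x) + 1)\<^sup>2"
    by (intro power_mono) auto
  also have "\<dots> \<le> 2 * (norm (v + x))\<^sup>2 + 2"
    using zero_le_power2[of "norm (v + x) - 1"] by (simp add: power2_eq_square algebra_simps)
  finally have "exp (- (norm (v + x))\<^sup>2) \<le> exp (1 + - (norm v)\<^sup>2 / 2)"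
    by simp
  also have "\<dots> = exp 1 * exp (- (norm v)\<^sup>2 / 2)"
    by (rule exp_add)
  finally show ?thesis .
qed

lemma norm_add_scaleR_axis_sq:
  fixes v :: "real^'n"
  shows "(norm (v + t *\<^sub>R axis i 1))\<^sup>2 = (norm v)\<^sup>2 + 2 * t * v $ i + t\<^sup>2"
  unfolding power2_norm_eq_inner
  by (simp add: inner_add_left inner_add_right inner_axis inner_axis' algebra_simps power2_eq_square)

lemma integrable_exp_minus_half_norm_sq:
  "integrable (lborel :: 'a::euclidean_space measure) (\<lambda>v. exp (- (norm v)\<^sup>2 / 2))"
proof -
  have "integrable lborel (\<lambda>x::real. sqrt (2 * pi) * std_normal_density x)"
    by (intro integrable_mult_right integrable_normal_density) simp
  then have gauss: "(\<integral>\<^sup>+t. ennreal (exp (- t\<^sup>2 / 2)) \<partial>lborel) < \<infinity>"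
    by (simp add: std_normal_density_def integrable_iff_bounded)
  have norm_sq: "(norm v)\<^sup>2 = (\<Sum>b\<in>Basis. (v \<bullet> b)\<^sup>2)" for v :: 'a
    unfolding power2_norm_eq_inner by (subst euclidean_inner) (simp add: power2_eq_square)
  have product: "(\<lambda>v::'a. exp (- (norm v)\<^sup>2 / 2)) = (\<lambda>v. \<Prod>b\<in>Basis. exp (- (v \<bullet> b)\<^sup>2 / 2))"
    by (auto simp: norm_sq exp_sum[symmetric] sum_divide_distrib sum_negf)
  have "(\<integral>\<^sup>+v. ennreal (\<Prod>b\<in>Basis. exp (- (v \<bullet> b)\<^sup>2 / 2)) \<partial>(lborel::'a measure))
      = (\<Prod>b\<in>(Basis::'a set). (\<integral>\<^sup>+t. ennreal (exp (- t\<^sup>2 / 2)) \<partial>lborel))"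
    using nn_integral_lborel_prod[of "\<lambda>b t. ennreal (exp (- t\<^sup>2 / 2))"] by (simp add: prod_ennreal)
  also have "\<dots> < \<infinity>"
    using gauss by (simp add: power_less_top_ennreal)
  finally show ?thesis
    unfolding product integrable_iff_bounded by (simp add: prod_nonneg)
qed

lemma abs_difference_quotient_le:
  fixes f f' :: "real \<Rightarrow> real"
  assumes f_deriv: "\<And>t. \<bar>t - x\<bar> < r \<Longrightarrow> (f has_real_derivative f' t) (at t)"
    and f'_bound: "\<And>t. \<bar>t - x\<bar> < r \<Longrightarrow> \<bar>f' t\<bar> \<le> B"
    and h: "h \<noteq> 0" "\<bar>h\<bar> < r"
  shows "\<bar>(f (x + h) - f x) / h\<bar> \<le> B"
proof -
  have ball: "t \<in> ball x r \<longleftrightarrow> \<bar>t - x\<bar> < r" for t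
    by (simp add: dist_real_def abs_minus_commute)
  have "norm (f (x + h) - f x) \<le> B * norm (x + h - x)"
  proof (rule field_differentiable_bound[of "ball x r" f f'])
    show "(f has_real_derivative f' t) (at t within ball x r)" if "t \<in> ball x r" for t
      using that unfolding ball by (rule has_field_derivative_at_within[OF f_deriv])
    show "norm (f' t) \<le> B" if "t \<in> ball x r" for t
      using that unfolding ball by (simp add: f'_bound)
  qed (use h in \<open>simp_all add: dist_real_def\<close>)
  then show ?thesis
    using h by (simp add: divide_le_eq)
qed

lemma integral_dominated_convergence_at:
  fixes s :: "real \<Rightarrow> 'a \<Rightarrow> real"
  assumes "L \<in> borel_measurable M" "\<And>t. s t \<in> borel_measurable M" "integrable M w"
    and lim: "AE v in M. ((\<lambda>t. s t v) \<longlongrightarrow> L v) (at a)"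
    and bound: "\<forall>\<^sub>F t in at a. AE v in M. norm (s t v) \<le> w v"
  shows "((\<lambda>t. \<integral>v. s t v \<partial>M) \<longlongrightarrow> (\<integral>v. L v \<partial>M)) (at a)"
  unfolding tendsto_at_iff_sequentially comp_def
proof (intro allI impI)
  fix X :: "nat \<Rightarrow> real" assume "\<forall>n. X n \<in> UNIV - {a}" and "X \<longlonglongrightarrow> a"
  then have X: "filterlim X (at a) sequentially"
    by (simp add: filterlim_at)
  from filterlim_iff[THEN iffD1, OF this, rule_format, OF bound]
  obtain N where w: "\<And>n. N \<le> n \<Longrightarrow> AE v in M. norm (s (X n) v) \<le> w v"
    by (auto simp: eventually_sequentially)
  show "(\<lambda>n. \<integral>v. s (X n) v \<partial>M) \<longlonglongrightarrow> (\<integral>v. L v \<partial>M)"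
  proof (rule LIMSEQ_offset, rule integral_dominated_convergence)
    show "AE v in M. norm (s (X (n + N)) v) \<le> w v" for n
      by (rule w) simp
    show "AE v in M. (\<lambda>n. s (X (n + N)) v) \<longlonglongrightarrow> L v"
      using lim
    proof eventually_elim
      fix v assume "((\<lambda>t. s t v) \<longlongrightarrow> L v) (at a)"
      then show "(\<lambda>n. s (X (n + N)) v) \<longlonglongrightarrow> L v"
        by (intro LIMSEQ_ignore_initial_segment filterlim_compose[OF _ X])
    qed
  qed (use assms in auto)
qed

lemma has_real_derivative_integral_dominated:
  fixes F F' :: "real \<Rightarrow> 'a \<Rightarrow> real"
  assumes "r > 0"
    and F_meas: "\<And>t. F t \<in> borel_measurable M" and F'_meas: "F' x \<in> borel_measurable M"
    and F_int: "integrable M (F x)" and g_int: "integrable M g"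
    and F_deriv: "\<And>t v. \<bar>t - x\<bar> < r \<Longrightarrow> ((\<lambda>s. F s v) has_real_derivative F' t v) (at t)"
    and F'_bound: "\<And>t v. \<bar>t - x\<bar> < r \<Longrightarrow> \<bar>F' t v\<bar> \<le> g v"
  shows "((\<lambda>t. \<integral>v. F t v \<partial>M) has_real_derivative (\<integral>v. F' x v \<partial>M)) (at x)"
proof -
  define DQ where "DQ h v = (F (x + h) v - F x v) / h" for h v
  have DQ_bound: "\<bar>DQ h v\<bar> \<le> g v" if "h \<noteq> 0" "\<bar>h\<bar> < r" for h v
    unfolding DQ_def by (rule abs_difference_quotient_le[OF F_deriv F'_bound that])
  have DQ_meas: "DQ h \<in> borel_measurable M" for h
    unfolding DQ_def[abs_def] using F_meas by measurable
  have near_0: "\<forall>\<^sub>F h in at 0. h \<noteq> 0 \<and> \<bar>h\<bar> < r"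
    unfolding eventually_at using \<open>r > 0\<close> by (intro exI[of _ r]) (auto simp: dist_real_def)
  have integral_DQ: "\<forall>\<^sub>F h in at 0. (\<integral>v. DQ h v \<partial>M) = ((\<integral>v. F (x + h) v \<partial>M) - (\<integral>v. F x v \<partial>M)) / h"
    using near_0
  proof eventually_elim
    case (elim h)
    have "integrable M (DQ h)"
      using DQ_bound[of h] elim
      by (intro Bochner_Integration.integrable_bound[OF g_int DQ_meas] AE_I2) (auto intro: order_trans[OF _ abs_ge_self])
    moreover have "F (x + h) v = F x v + h * DQ h v" for v
      using elim by (simp add: DQ_def)
    ultimately show ?case
      using F_int elim by (simp add: field_simps)
  qed
  moreover have "((\<lambda>h. \<integral>v. DQ h v \<partial>M) \<longlongrightarrow> (\<integral>v. F' x v \<partial>M)) (at 0)"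
  proof (rule integral_dominated_convergence_at[OF F'_meas DQ_meas g_int])
    show "AE v in M. ((\<lambda>h. DQ h v) \<longlongrightarrow> F' x v) (at 0)"
      using F_deriv[of x] \<open>r > 0\<close> unfolding DERIV_def DQ_def by simp
    show "\<forall>\<^sub>F h in at 0. AE v in M. norm (DQ h v) \<le> g v"
      using near_0 by eventually_elim (simp add: DQ_bound)
  qed
  ultimately show ?thesis
    unfolding DERIV_def using tendsto_cong[OF integral_DQ] by simp
qed

lemma lborel_integral_translate:
  fixes f :: "'a::euclidean_space \<Rightarrow> real"
  assumes "f \<in> borel_measurable borel"
  shows "(\<integral>x. f (c + x) \<partial>lborel) = (\<integral>x. f x \<partial>lborel)"
proof -
  have "(\<integral>x. f x \<partial>lborel) = (\<integral>x. f x \<partial>distr lborel borel ((+) c))"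
    by (simp add: lborel_distr_plus)
  also have "\<dots> = (\<integral>x. f (c + x) \<partial>lborel)"
    by (rule integral_distr) (use assms in auto)
  finally show ?thesis by simp
qed

lemma lborel_integrable_translate:
  fixes f :: "'a::euclidean_space \<Rightarrow> real"
  assumes "integrable lborel f"
  shows "integrable lborel (\<lambda>x. f (c + x))"
proof -
  have "integrable (distr lborel borel ((+) c)) f"
    using assms by (simp add: lborel_distr_plus)
  then show ?thesis
    using assms by (subst (asm) integrable_distr_eq) auto
qed

lemma integral_directional_derivative_eq_0:
  fixes G G' g :: "'a::euclidean_space \<Rightarrow> real"
  assumes G_int: "integrable lborel G" and g_int: "integrable lborel g"
    and G'_meas: "G' \<in> borel_measurable borel"
    and G_deriv: "\<And>v t. ((\<lambda>s. G (v + s *\<^sub>R e)) has_real_derivative G' (v + t *\<^sub>R e)) (at t)"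
    and G'_bound: "\<And>v t. \<bar>t\<bar> < 1 \<Longrightarrow> \<bar>G' (v + t *\<^sub>R e)\<bar> \<le> g v"
  shows "(\<integral>v. G' v \<partial>lborel) = 0"
proof -
  have G_meas: "G \<in> borel_measurable borel"
    using G_int by auto
  have translate_invariant: "(\<integral>v. G (v + t *\<^sub>R e) \<partial>lborel) = (\<integral>v. G v \<partial>lborel)" for t
    using lborel_integral_translate[OF G_meas, of "t *\<^sub>R e"] by (simp add: add.commute)
  have "((\<lambda>t. \<integral>v. G (v + t *\<^sub>R e) \<partial>lborel) has_real_derivative (\<integral>v. G' (v + 0 *\<^sub>R e) \<partial>lborel)) (at 0)"
    by (rule has_real_derivative_integral_dominated[where r=1 and g=g])
       (use G_int g_int G_meas G'_meas G_deriv G'_bound in auto)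
  then have "((\<lambda>t. \<integral>v. G v \<partial>lborel) has_real_derivative (\<integral>v. G' v \<partial>lborel)) (at 0)"
    unfolding translate_invariant by simp
  then show ?thesis
    using DERIV_const DERIV_unique by blast
qed

lemma integral_mult_indicator_ball_pos:
  fixes f :: "'a::euclidean_space \<Rightarrow> real"
  assumes f_int: "integrable lborel f" and "r > 0" and f_pos: "\<And>v. v \<in> ball c r \<Longrightarrow> 0 < f v"
  shows "0 < (\<integral>v. f v * indicator (ball c r) v \<partial>lborel)"
proof -
  have int: "integrable lborel (\<lambda>v. f v * indicator (ball c r) v)"
    using f_int by (rule integrable_real_mult_indicator[rotated]) simp
  have nonneg: "AE v in lborel. 0 \<le> f v * indicator (ball c r) v"
    using f_pos by (intro AE_I2) (simp add: indicator_def less_imp_le)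
  have "(\<integral>v. f v * indicator (ball c r) v \<partial>lborel) \<noteq> 0"
  proof
    assume "(\<integral>v. f v * indicator (ball c r) v \<partial>lborel) = 0"
    then have "AE v in lborel. f v * indicator (ball c r) v = 0"
      using integral_nonneg_eq_0_iff_AE[OF int nonneg] by simp
    moreover have "v \<notin> ball c r" if "f v * indicator (ball c r) v = 0" for v
      using f_pos[of v] that by (auto simp: indicator_def split: if_splits)
    ultimately have "AE v in lborel. v \<notin> ball c r"
      by (rule eventually_mono)
    then have "emeasure lborel (ball c r) = 0"
      by (subst (asm) AE_iff_measurable[OF _ refl]) (auto simp: ball_def)
    moreover have "measure lborel (ball c r) > 0"
      using \<open>r > 0\<close> by (rule content_ball_pos)
    ultimately show False
      by (simp add: measure_def)
  qed
  moreover have "0 \<le> (\<integral>v. f v * indicator (ball c r) v \<partial>lborel)"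
    using nonneg by (rule integral_nonneg_AE)
  ultimately show ?thesis
    by simp
qed

lemma integral_ball_le_by_translate:
  fixes f g :: "'a::euclidean_space \<Rightarrow> real"
  assumes f_int: "integrable lborel f" and g_int: "integrable lborel g"
    and c: "2 * r \<le> norm c"
    and f_nonneg: "\<And>v. v \<notin> ball 0 r \<Longrightarrow> 0 \<le> f v"
    and f_pair: "\<And>v. v \<in> ball 0 r \<Longrightarrow> g v \<le> f v + f (c + v)"
  shows "(\<integral>v. g v * indicator (ball 0 r) v \<partial>lborel) \<le> (\<integral>v. f v \<partial>lborel)"
proof -
  let ?B = "ball (0::'a) r" and ?S = "ball c r"
  have f_meas: "f \<in> borel_measurable borel"
    using f_int by auto
  have disjoint: "v \<notin> ?B" if "v \<in> ?S" for v
  proof -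
    have "norm c \<le> norm v + norm (v - c)"
      using norm_triangle_ineq4[of v "v - c"] by simp
    then show ?thesis
      using that c by (auto simp: dist_norm norm_minus_commute)
  qed
  have fB_int: "integrable lborel (\<lambda>v. f v * indicator ?B v)"
    and fS_int: "integrable lborel (\<lambda>v. f v * indicator ?S v)"
    and gB_int: "integrable lborel (\<lambda>v. g v * indicator ?B v)"
    using f_int g_int by (auto intro: integrable_real_mult_indicator)
  have f_outside_int: "integrable lborel (\<lambda>v. f v * (1 - indicator ?B v))"
    using f_int fB_int by (simp add: right_diff_distrib)
  have fS_meas: "(\<lambda>v. f v * indicator ?S v) \<in> borel_measurable borel"
    by (rule borel_measurable_times[OF f_meas borel_measurable_indicator]) simp
  have shifted_eq: "(\<lambda>v. f (c + v) * indicator ?S (c + v)) = (\<lambda>v. f (c + v) * indicator ?B v)"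
    by (auto simp: indicator_def dist_norm)
  have shifted_int: "integrable lborel (\<lambda>v. f (c + v) * indicator ?B v)"
    using lborel_integrable_translate[OF fS_int, of c] unfolding shifted_eq .
  have "(\<integral>v. g v * indicator ?B v \<partial>lborel) \<le> (\<integral>v. f v * indicator ?B v + f (c + v) * indicator ?B v \<partial>lborel)"
    using gB_int fB_int shifted_int f_pair
    by (intro integral_mono) (auto simp: indicator_def)
  also have "\<dots> = (\<integral>v. f v * indicator ?B v \<partial>lborel) + (\<integral>v. f v * indicator ?S v \<partial>lborel)"
    using fB_int shifted_int lborel_integral_translate[OF fS_meas, of c]
    by (simp add: shifted_eq)
  also have "\<dots> \<le> (\<integral>v. f v * indicator ?B v \<partial>lborel) + (\<integral>v. f v * (1 - indicator ?B v) \<partial>lborel)"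
    using fS_int f_outside_int f_nonneg disjoint
    by (intro add_left_mono integral_mono) (auto simp: indicator_def)
  also have "\<dots> = (\<integral>v. f v \<partial>lborel)"
    using fB_int f_int by (simp add: right_diff_distrib)
  finally show ?thesis .
qed

(* D times the exponent of the weight in Htilde, with a and s standing for v_i and |v|^2. *)
definition Htilde_exponent :: "real \<Rightarrow> real \<Rightarrow> real \<Rightarrow> real \<Rightarrow> real" where
  "Htilde_exponent \<alpha> u a s = - s / 2 + u * a - \<alpha> * (s\<^sup>2 / 4 - s / 2)"

definition Htilde_density :: "real \<Rightarrow> 'n::finite \<Rightarrow> real \<Rightarrow> real \<Rightarrow> real^'n \<Rightarrow> real" where
  "Htilde_density \<alpha> i u D v = exp (Htilde_exponent \<alpha> u (v $ i) ((norm v)\<^sup>2) / D)"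

lemma Htilde_density_pos [simp]: "0 < Htilde_density \<alpha> i u D v"
  by (simp add: Htilde_density_def)

lemma Htilde_density_nonneg [simp]: "0 \<le> Htilde_density \<alpha> i u D v"
  by (simp add: Htilde_density_def)

lemma abs_Htilde_density [simp]: "\<bar>Htilde_density \<alpha> i u D v\<bar> = Htilde_density \<alpha> i u D v"
  by (simp add: Htilde_density_def)

lemma continuous_Htilde_density [continuous_intros]:
  "continuous_on S (Htilde_density \<alpha> i u D)"
  unfolding Htilde_density_def Htilde_exponent_def divide_inverse by (intro continuous_intros)

definition Htilde_moment :: "real \<Rightarrow> 'n::finite \<Rightarrow> real \<Rightarrow> real \<Rightarrow> real^'n \<Rightarrow> real" where
  "Htilde_moment \<alpha> i u D v = (v $ i)\<^sup>2 * ((norm v)\<^sup>2 - 1) * Htilde_density \<alpha> i u D v"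

lemma Htilde_eq_integral_density:
  fixes i :: "'n::finite"
  shows "Htilde \<alpha> i u D = (\<integral>v. (v $ i - u) * Htilde_density \<alpha> i u D v \<partial>lborel)"
  unfolding Htilde_def
proof (intro Bochner_Integration.integral_cong refl)
  fix v :: "real^'n"
  have "norm v ^ 4 = ((norm v)\<^sup>2)\<^sup>2"
    by simp
  then have "- (norm v ^ 2) / (2 * D) + u * v $ i / D + (- \<alpha> * (norm v ^ 4 / (4 * D) - norm v ^ 2 / (2 * D)))
      = Htilde_exponent \<alpha> u (v $ i) ((norm v)\<^sup>2) / D"
    by (simp add: Htilde_exponent_def add_divide_distrib diff_divide_distrib algebra_simps)
  then show "(v $ i - u) * exp (- (norm v ^ 2) / (2 * D) + u * v $ i / D) *
      exp (- \<alpha> * (norm v ^ 4 / (4 * D) - norm v ^ 2 / (2 * D)))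
      = (v $ i - u) * Htilde_density \<alpha> i u D v"
    unfolding Htilde_density_def mult.assoc exp_add[symmetric] by simp
qed

lemma Htilde_density_gaussian_bound:
  fixes i :: "'n::finite"
  assumes "\<alpha> > 0" "D > 0"
  obtains C where "C > 0"
    "\<And>v t. \<bar>t\<bar> \<le> U \<Longrightarrow> (1 + norm v) ^ k * Htilde_density \<alpha> i t D v \<le> C * exp (- (norm v)\<^sup>2)"
proof
  define a where "a = \<alpha> / (4 * D)"
  define b where "b = (\<alpha> - 1) / (2 * D)"
  define c where "c = real k + U / D"
  define M where "M = c\<^sup>2 / 4 + (b + 2)\<^sup>2 / (4 * a)"
  show "exp M > 0" by simp
  fix v :: "real^'n" and t :: real
  assume t: "\<bar>t\<bar> \<le> U"
  define r where "r = norm v"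
  have "t * v $ i \<le> \<bar>t\<bar> * \<bar>v $ i\<bar>"
    by (metis abs_ge_self abs_mult)
  also have "\<dots> \<le> U * r"
    using t component_le_norm_cart[of v i] by (intro mult_mono) (auto simp: r_def)
  finally have "Htilde_exponent \<alpha> t (v $ i) (r\<^sup>2) \<le> - r\<^sup>2 / 2 + U * r - \<alpha> * (r ^ 4 / 4 - r\<^sup>2 / 2)"
    by (simp add: Htilde_exponent_def flip: power_mult)
  then have "Htilde_exponent \<alpha> t (v $ i) (r\<^sup>2) / D \<le> (- r\<^sup>2 / 2 + U * r - \<alpha> * (r ^ 4 / 4 - r\<^sup>2 / 2)) / D"
    using \<open>D > 0\<close> by (simp add: divide_right_mono)
  also have "\<dots> = (U / D) * r + b * r\<^sup>2 - a * r ^ 4"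
    using \<open>D > 0\<close> by (simp add: a_def b_def field_simps)
  finally have "Htilde_exponent \<alpha> t (v $ i) (r\<^sup>2) / D \<le> (U / D) * r + b * r\<^sup>2 - a * r ^ 4" .
  moreover have "(1 + r) ^ k \<le> exp (real k * r)"
  proof -
    have "(1 + r) ^ k \<le> (exp r) ^ k"
      by (intro power_mono) (auto simp: r_def add.commute exp_ge_add_one_self)
    then show ?thesis by (simp add: exp_of_nat_mult)
  qed
  moreover have "c * r + b * r\<^sup>2 - a * r ^ 4 \<le> M - r\<^sup>2"
    unfolding M_def using \<open>\<alpha> > 0\<close> \<open>D > 0\<close> by (intro linear_quadratic_minus_quartic_le) (simp add: a_def)
  ultimately have "(1 + r) ^ k * Htilde_density \<alpha> i t D v \<le> exp (real k * r) * exp (M - r\<^sup>2 - real k * r)"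
    unfolding Htilde_density_def r_def[symmetric]
    by (intro mult_mono) (auto simp: c_def algebra_simps)
  then show "(1 + norm v) ^ k * Htilde_density \<alpha> i t D v \<le> exp M * exp (- (norm v)\<^sup>2)"
    by (simp add: r_def flip: exp_add)
qed

(* Uniform in |t| <= U and in shifts of norm at most 1, as needed both for differentiating in u
   and for integrating by parts along e_i. *)
lemma Htilde_density_dominated:
  fixes i :: "'n::finite"
  assumes "\<alpha> > 0" "D > 0"
  obtains g :: "real^'n \<Rightarrow> real" where "integrable lborel g"
    "\<And>t x v. \<bar>t\<bar> \<le> U \<Longrightarrow> norm x \<le> 1 \<Longrightarrow>
      (1 + norm (v + x)) ^ k * Htilde_density \<alpha> i t D (v + x) \<le> g v"
proof -
  obtain C where "C > 0" and C: "\<And>v t. \<bar>t\<bar> \<le> U \<Longrightarrow>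
      (1 + norm v) ^ k * Htilde_density \<alpha> i t D v \<le> C * exp (- (norm v)\<^sup>2)"
    using Htilde_density_gaussian_bound[OF assms] by blast
  show ?thesis
  proof (rule that)
    show "integrable lborel (\<lambda>v::real^'n. C * exp 1 * exp (- (norm v)\<^sup>2 / 2))"
      by (intro integrable_mult_right integrable_exp_minus_half_norm_sq)
    fix t x v assume "\<bar>t\<bar> \<le> U" "norm (x::real^'n) \<le> 1"
    have "(1 + norm (v + x)) ^ k * Htilde_density \<alpha> i t D (v + x) \<le> C * exp (- (norm (v + x))\<^sup>2)"
      using \<open>\<bar>t\<bar> \<le> U\<close> by (rule C)
    also have "\<dots> \<le> C * (exp 1 * exp (- (norm v)\<^sup>2 / 2))"
      using \<open>C > 0\<close> \<open>norm x \<le> 1\<close> by (intro mult_left_mono exp_minus_norm_sq_translate_le) auto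
    finally show "(1 + norm (v + x)) ^ k * Htilde_density \<alpha> i t D (v + x) \<le> C * exp 1 * exp (- (norm v)\<^sup>2 / 2)"
      by (simp add: mult.assoc)
  qed
qed

lemma integrable_bounded_by_Htilde_density:
  fixes f :: "real^'n::finite \<Rightarrow> real" and i :: 'n
  assumes "\<alpha> > 0" "D > 0" "f \<in> borel_measurable borel"
    and f_bound: "\<And>v. \<bar>f v\<bar> \<le> K * (1 + norm v) ^ k * Htilde_density \<alpha> i u D v"
  shows "integrable lborel f"
proof -
  obtain g where g_int: "integrable lborel g" and g_shift: "\<And>t x v. \<bar>t\<bar> \<le> \<bar>u\<bar> \<Longrightarrow> norm x \<le> 1 \<Longrightarrow>
      (1 + norm (v + x)) ^ k * Htilde_density \<alpha> i t D (v + x) \<le> g v"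
    using Htilde_density_dominated[OF assms(1,2)] by blast
  have g: "(1 + norm v) ^ k * Htilde_density \<alpha> i u D v \<le> g v" for v
    using g_shift[of u 0 v] by simp
  have f_le: "\<bar>f v\<bar> \<le> \<bar>K\<bar> * g v" for v
  proof -
    have "0 \<le> (1 + norm v) ^ k * Htilde_density \<alpha> i u D v"
      by (simp add: less_imp_le)
    then have "K * ((1 + norm v) ^ k * Htilde_density \<alpha> i u D v) \<le> \<bar>K\<bar> * ((1 + norm v) ^ k * Htilde_density \<alpha> i u D v)"
      by (rule mult_right_mono[OF abs_ge_self])
    then have "\<bar>f v\<bar> \<le> \<bar>K\<bar> * ((1 + norm v) ^ k * Htilde_density \<alpha> i u D v)"
      using f_bound[of v] unfolding mult.assoc by linarith
    also have "\<dots> \<le> \<bar>K\<bar> * g v"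
      by (intro mult_left_mono g) simp
    finally show ?thesis .
  qed
  have "norm (f v) \<le> norm (\<bar>K\<bar> * g v)" for v
    unfolding real_norm_def abs_mult abs_abs
    using f_le[of v] mult_left_mono[OF abs_ge_self[of "g v"] abs_ge_zero[of K]] by linarith
  then have "AE v in lborel. norm (f v) \<le> norm (\<bar>K\<bar> * g v)"
    by (rule AE_I2)
  moreover have "f \<in> borel_measurable lborel"
    using assms(3) by simp
  ultimately show ?thesis
    by (intro Bochner_Integration.integrable_bound[OF integrable_mult_right[OF g_int]])
qed

lemma abs_Htilde_u_derivative_le:
  fixes i :: "'n::finite"
  assumes "D > 0" "\<bar>t\<bar> \<le> U"
  shows "\<bar>(-1 + (v $ i - t) * v $ i / D) * Htilde_density \<alpha> i t D v\<bar>
    \<le> (1 + (1 + U) / D) * (1 + norm v)\<^sup>2 * Htilde_density \<alpha> i t D v"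
proof -
  define r where "r = norm v"
  have r: "\<bar>v $ i\<bar> \<le> r" "0 \<le> r"
    using component_le_norm_cart[of v i] by (auto simp: r_def)
  have "0 \<le> U"
    using assms(2) by linarith
  have "\<bar>(v $ i - t) * v $ i\<bar> \<le> (r + U) * r"
    unfolding abs_mult using r assms(2) by (intro mult_mono) auto
  also have "\<dots> \<le> (1 + U) * (1 + r)\<^sup>2"
    using r \<open>0 \<le> U\<close> mult_nonneg_nonneg[OF \<open>0 \<le> U\<close> \<open>0 \<le> r\<close>]
      mult_nonneg_nonneg[OF \<open>0 \<le> U\<close> zero_le_power2[of r]]
    by (simp add: power2_eq_square algebra_simps)
  finally have "\<bar>-1 + (v $ i - t) * v $ i / D\<bar> \<le> \<bar>-1\<bar> + (1 + U) * (1 + r)\<^sup>2 / D"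
    by (rule abs_add_divide_le[OF assms(1)])
  also have "\<dots> \<le> (1 + (1 + U) / D) * (1 + r)\<^sup>2"
    using r by (simp add: algebra_simps)
  finally show ?thesis
    using Htilde_density_pos[of \<alpha> i t D v] by (simp add: abs_mult r_def mult_right_mono)
qed

lemma abs_Htilde_shift_derivative_le:
  fixes i :: "'n::finite"
  assumes "D > 0" "\<alpha> \<ge> 0"
  shows "\<bar>Htilde_density \<alpha> i u D v * (1 + v $ i * (u - v $ i - \<alpha> * v $ i * ((norm v)\<^sup>2 - 1)) / D)\<bar>
    \<le> (1 + (\<bar>u\<bar> + 1 + 2 * \<alpha>) / D) * (1 + norm v) ^ 4 * Htilde_density \<alpha> i u D v"
proof -
  define r where "r = norm v"
  define a where "a = v $ i"
  have r: "\<bar>a\<bar> \<le> r" "0 \<le> r"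
    using component_le_norm_cart[of v i] by (auto simp: r_def a_def)
  then have a2: "a\<^sup>2 \<le> r\<^sup>2"
    by (metis abs_le_square_iff abs_of_nonneg)
  have "\<bar>a * u\<bar> \<le> r * \<bar>u\<bar>"
    using r by (simp add: abs_mult mult_right_mono)
  moreover have "\<bar>\<alpha> * a\<^sup>2 * (r\<^sup>2 - 1)\<bar> \<le> \<alpha> * r\<^sup>2 * (r\<^sup>2 + 1)"
    using a2 assms(2) by (auto simp: abs_mult abs_le_iff intro!: mult_mono)
  moreover have "\<bar>a * (u - a - \<alpha> * a * (r\<^sup>2 - 1))\<bar> \<le> \<bar>a * u\<bar> + a\<^sup>2 + \<bar>\<alpha> * a\<^sup>2 * (r\<^sup>2 - 1)\<bar>"
  proof -
    have "a * (u - a - \<alpha> * a * (r\<^sup>2 - 1)) = a * u - a\<^sup>2 - \<alpha> * a\<^sup>2 * (r\<^sup>2 - 1)"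
      by (simp add: algebra_simps power2_eq_square)
    then show ?thesis
      using zero_le_power2[of a] by arith
  qed
  moreover have "r * \<bar>u\<bar> \<le> \<bar>u\<bar> * (1 + r) ^ 4"
    using mult_left_mono[OF power_le_one_plus_power[of r 1 4], of "\<bar>u\<bar>"] r by (simp add: mult.commute)
  moreover have "a\<^sup>2 \<le> (1 + r) ^ 4"
    using a2 power_le_one_plus_power[of r 2 4] r by linarith
  moreover have "\<alpha> * r\<^sup>2 * (r\<^sup>2 + 1) \<le> \<alpha> * (2 * (1 + r) ^ 4)"
  proof -
    have "r\<^sup>2 * (r\<^sup>2 + 1) = r ^ 4 + r\<^sup>2"
      by (simp add: algebra_simps flip: power_add)
    also have "\<dots> \<le> 2 * (1 + r) ^ 4"
      using power_le_one_plus_power[of r 2 4] power_le_one_plus_power[of r 4 4] r by linarith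
    finally show ?thesis
      using assms(2) by (simp add: mult.assoc mult_left_mono)
  qed
  ultimately have "\<bar>a * (u - a - \<alpha> * a * (r\<^sup>2 - 1))\<bar> \<le> (\<bar>u\<bar> + 1 + 2 * \<alpha>) * (1 + r) ^ 4"
    by (simp add: algebra_simps)
  then have "\<bar>1 + a * (u - a - \<alpha> * a * (r\<^sup>2 - 1)) / D\<bar> \<le> \<bar>1\<bar> + (\<bar>u\<bar> + 1 + 2 * \<alpha>) * (1 + r) ^ 4 / D"
    by (rule abs_add_divide_le[OF assms(1)])
  also have "\<dots> \<le> (1 + (\<bar>u\<bar> + 1 + 2 * \<alpha>) / D) * (1 + r) ^ 4"
    using r by (simp add: algebra_simps)
  finally show ?thesis
    using Htilde_density_pos[of \<alpha> i u D v] by (simp add: abs_mult r_def a_def mult_left_mono mult.commute)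
qed

lemma has_real_derivative_Htilde_integrand:
  assumes "D \<noteq> 0"
  shows "((\<lambda>u. (a - u) * exp (Htilde_exponent \<alpha> u a s / D)) has_real_derivative
    (-1 + (a - u) * a / D) * exp (Htilde_exponent \<alpha> u a s / D)) (at u)"
  unfolding Htilde_exponent_def
  apply (rule derivative_eq_intros refl | simp add: assms)+
  apply (simp add: assms field_simps)
  done

lemma has_real_derivative_Htilde_axis_shift:
  assumes "D \<noteq> 0"
  shows "((\<lambda>t. (a + t) * exp (Htilde_exponent \<alpha> u (a + t) (s + 2 * t * a + t\<^sup>2) / D)) has_real_derivative
    exp (Htilde_exponent \<alpha> u (a + t) (s + 2 * t * a + t\<^sup>2) / D) *
      (1 + (a + t) * (u - (a + t) - \<alpha> * (a + t) * ((s + 2 * t * a + t\<^sup>2) - 1)) / D)) (at t)"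
  unfolding Htilde_exponent_def
  apply (rule derivative_eq_intros refl | simp add: assms)+
  apply (simp add: assms field_simps power2_eq_square)
  done

lemma has_real_derivative_Htilde:
  fixes i :: "'n::finite"
  assumes "\<alpha> > 0" "D > 0"
  shows "((\<lambda>w. Htilde \<alpha> i w D) has_real_derivative
    (\<integral>v. (-1 + (v $ i - u) * v $ i / D) * Htilde_density \<alpha> i u D v \<partial>lborel)) (at u)"
proof -
  define U where "U = \<bar>u\<bar> + 1"
  obtain g where g_int: "integrable lborel g"
    and g: "\<And>t x v. \<bar>t\<bar> \<le> U \<Longrightarrow> norm x \<le> 1 \<Longrightarrow>
      (1 + norm (v + x)) ^ 2 * Htilde_density \<alpha> i t D (v + x) \<le> g v"
    using Htilde_density_dominated[OF assms] by blast
  define K where "K = 1 + (1 + U) / D"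
  have "K \<ge> 0"
    using assms by (simp add: K_def U_def)
  show ?thesis
    unfolding Htilde_eq_integral_density
  proof (rule has_real_derivative_integral_dominated[where r=1 and g="\<lambda>v. K * g v"])
    show "integrable lborel (\<lambda>v. (v $ i - u) * Htilde_density \<alpha> i u D v)"
    proof (rule integrable_bounded_by_Htilde_density[OF assms, where K="1 + \<bar>u\<bar>" and k=1])
      show "(\<lambda>v. (v $ i - u) * Htilde_density \<alpha> i u D v) \<in> borel_measurable borel"
        by (intro borel_measurable_continuous_onI continuous_intros)
      fix v :: "real^'n"
      have "\<bar>v $ i - u\<bar> \<le> norm v + \<bar>u\<bar>"
        using component_le_norm_cart[of v i] abs_triangle_ineq4[of "v $ i" u] by linarith
      also have "\<dots> \<le> (1 + \<bar>u\<bar>) * (1 + norm v)"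
        by (simp add: algebra_simps)
      finally show "\<bar>(v $ i - u) * Htilde_density \<alpha> i u D v\<bar> \<le> (1 + \<bar>u\<bar>) * (1 + norm v) ^ 1 * Htilde_density \<alpha> i u D v"
        by (simp add: abs_mult mult_right_mono)
    qed
    show "\<bar>(-1 + (v $ i - t) * v $ i / D) * Htilde_density \<alpha> i t D v\<bar> \<le> K * g v"
      if "\<bar>t - u\<bar> < 1" for t v
    proof -
      have "\<bar>t\<bar> \<le> U" using that by (simp add: U_def)
      then show ?thesis
        using abs_Htilde_u_derivative_le[OF \<open>D > 0\<close>, of t U v i \<alpha>] mult_left_mono[OF g[of t 0 v] \<open>K \<ge> 0\<close>]
        by (simp add: K_def mult.assoc)
    qed
    show "((\<lambda>w. (v $ i - w) * Htilde_density \<alpha> i w D v) has_real_derivative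
        (-1 + (v $ i - t) * v $ i / D) * Htilde_density \<alpha> i t D v) (at t)" for t v
      unfolding Htilde_density_def using assms by (intro has_real_derivative_Htilde_integrand) simp
  qed (use g_int assms in \<open>auto intro!: continuous_intros borel_measurable_continuous_onI\<close>)
qed

(* The integrand is the derivative of v_i * Htilde_density(v) in direction e_i. *)
lemma integral_Htilde_axis_derivative_eq_0:
  fixes i :: "'n::finite"
  assumes "\<alpha> > 0" "D > 0"
  shows "(\<integral>v. Htilde_density \<alpha> i u D v *
    (1 + v $ i * (u - v $ i - \<alpha> * v $ i * ((norm v)\<^sup>2 - 1)) / D) \<partial>lborel) = 0"
proof -
  define e :: "real^'n" where "e = axis i 1"
  obtain g where g_int: "integrable lborel g"
    and g: "\<And>t x v. \<bar>t\<bar> \<le> \<bar>u\<bar> \<Longrightarrow> norm x \<le> 1 \<Longrightarrow>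
      (1 + norm (v + x)) ^ 4 * Htilde_density \<alpha> i t D (v + x) \<le> g v"
    using Htilde_density_dominated[OF assms] by blast
  define K where "K = 1 + (\<bar>u\<bar> + 1 + 2 * \<alpha>) / D"
  have "K \<ge> 0"
    using assms by (simp add: K_def)
  show ?thesis
  proof (rule integral_directional_derivative_eq_0[where e=e and g="\<lambda>v. K * g v"])
    show "integrable lborel (\<lambda>v. v $ i * Htilde_density \<alpha> i u D v)"
    proof (rule integrable_bounded_by_Htilde_density[OF assms, where K=1 and k=1])
      show "(\<lambda>v. v $ i * Htilde_density \<alpha> i u D v) \<in> borel_measurable borel"
        by (intro borel_measurable_continuous_onI continuous_intros)
      show "\<bar>v $ i * Htilde_density \<alpha> i u D v\<bar> \<le> 1 * (1 + norm v) ^ 1 * Htilde_density \<alpha> i u D v" for v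
        using component_le_norm_cart[of v i] by (simp add: abs_mult mult_right_mono)
    qed
    show "integrable lborel (\<lambda>v. K * g v)"
      using g_int by simp
    show "(\<lambda>v. Htilde_density \<alpha> i u D v * (1 + v $ i * (u - v $ i - \<alpha> * v $ i * ((norm v)\<^sup>2 - 1)) / D))
      \<in> borel_measurable borel"
      using assms by (intro borel_measurable_continuous_onI continuous_intros) auto
    show "((\<lambda>s. (v + s *\<^sub>R e) $ i * Htilde_density \<alpha> i u D (v + s *\<^sub>R e)) has_real_derivative
        Htilde_density \<alpha> i u D (v + t *\<^sub>R e) * (1 + (v + t *\<^sub>R e) $ i * (u - (v + t *\<^sub>R e) $ i -
          \<alpha> * (v + t *\<^sub>R e) $ i * ((norm (v + t *\<^sub>R e))\<^sup>2 - 1)) / D)) (at t)" for v t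
      unfolding e_def Htilde_density_def norm_add_scaleR_axis_sq using assms
      by (simp add: has_real_derivative_Htilde_axis_shift)
    show "\<bar>Htilde_density \<alpha> i u D (v + t *\<^sub>R e) * (1 + (v + t *\<^sub>R e) $ i * (u - (v + t *\<^sub>R e) $ i -
        \<alpha> * (v + t *\<^sub>R e) $ i * ((norm (v + t *\<^sub>R e))\<^sup>2 - 1)) / D)\<bar> \<le> K * g v"
      if "\<bar>t\<bar> < 1" for v t
    proof -
      have "norm (t *\<^sub>R e) \<le> 1"
        using that by (simp add: e_def)
      then show ?thesis
        using abs_Htilde_shift_derivative_le[OF \<open>D > 0\<close>, of \<alpha> i u "v + t *\<^sub>R e"] assms(1)
          mult_left_mono[OF g[of u "t *\<^sub>R e" v] \<open>K \<ge> 0\<close>]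
        by (simp add: K_def mult.assoc)
    qed
  qed
qed

lemma has_real_derivative_Htilde_moment:
  fixes i :: "'n::finite"
  assumes "\<alpha> > 0" "D > 0"
  shows "((\<lambda>w. Htilde \<alpha> i w D) has_real_derivative
    - (\<alpha> / D) * (\<integral>v. Htilde_moment \<alpha> i u D v \<partial>lborel)) (at u)"
proof -
  define F' where "F' v = (-1 + (v $ i - u) * v $ i / D) * Htilde_density \<alpha> i u D v" for v :: "real^'n"
  define G' where "G' v = Htilde_density \<alpha> i u D v *
    (1 + v $ i * (u - v $ i - \<alpha> * v $ i * ((norm v)\<^sup>2 - 1)) / D)" for v :: "real^'n"
  have F'_int: "integrable lborel F'"
    unfolding F'_def using assms abs_Htilde_u_derivative_le[OF \<open>D > 0\<close>, of u "\<bar>u\<bar>"]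
    by (intro integrable_bounded_by_Htilde_density[OF assms, where k=2])
       (auto intro!: borel_measurable_continuous_onI continuous_intros)
  have G'_int: "integrable lborel G'"
    unfolding G'_def using assms abs_Htilde_shift_derivative_le[OF \<open>D > 0\<close>, of \<alpha> i u]
    by (intro integrable_bounded_by_Htilde_density[OF assms, where k=4])
       (auto intro!: borel_measurable_continuous_onI continuous_intros)
  have "F' v + G' v = - (\<alpha> / D) * Htilde_moment \<alpha> i u D v" for v
    using assms by (simp add: F'_def G'_def Htilde_moment_def field_simps power2_eq_square)
  then have "(\<integral>v. F' v \<partial>lborel) + (\<integral>v. G' v \<partial>lborel)
      = - (\<alpha> / D) * (\<integral>v. Htilde_moment \<alpha> i u D v \<partial>lborel)"
    using F'_int G'_int by (simp flip: Bochner_Integration.integral_add)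
  moreover have "(\<integral>v. G' v \<partial>lborel) = 0"
    unfolding G'_def using assms by (rule integral_Htilde_axis_derivative_eq_0)
  ultimately show ?thesis
    using has_real_derivative_Htilde[OF assms, of i u] by (simp add: F'_def)
qed

lemma abs_Htilde_moment_le:
  fixes i :: "'n::finite"
  shows "\<bar>Htilde_moment \<alpha> i u D v\<bar> \<le> 2 * (1 + norm v) ^ 4 * Htilde_density \<alpha> i u D v"
proof -
  define r where "r = norm v"
  have r0: "0 \<le> r"
    by (simp add: r_def)
  have "(v $ i)\<^sup>2 \<le> r\<^sup>2"
    using power_mono[OF component_le_norm_cart[of v i] abs_ge_zero, of 2] by (simp add: r_def)
  then have "(v $ i)\<^sup>2 * \<bar>r\<^sup>2 - 1\<bar> \<le> r\<^sup>2 * (r\<^sup>2 + 1)"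
    by (intro mult_mono) (auto simp: abs_le_iff)
  also have "\<dots> = r ^ 4 + r\<^sup>2"
    by (simp add: algebra_simps flip: power_add)
  also have "\<dots> \<le> 2 * (1 + r) ^ 4"
    using power_le_one_plus_power[OF r0, of 2 4] power_le_one_plus_power[OF r0, of 4 4] by linarith
  finally show ?thesis
    by (simp add: Htilde_moment_def abs_mult r_def mult_right_mono)
qed

(* Here D >= 8 + 65 alpha is used: on the unit ball the translation lowers D times the exponent
   by at most 8 + 62.5 alpha. *)
lemma Htilde_density_translate_ge:
  fixes i :: "'n::finite"
  assumes "\<alpha> > 0" "u \<ge> 0" "D \<ge> 8 + 65 * \<alpha>" "norm v < 1"
  shows "exp (-1) * Htilde_density \<alpha> i u D v \<le> Htilde_density \<alpha> i u D (3 *\<^sub>R axis i 1 + v)"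
proof -
  define w where "w = 3 *\<^sub>R axis i 1 + v"
  define V where "V = (norm v)\<^sup>2"
  define W where "W = (norm w)\<^sup>2"
  have "D > 0"
    using assms by simp
  have V: "0 \<le> V" "V < 1"
    using assms(4) by (auto simp: V_def power_less_one_iff)
  have wi: "w $ i = 3 + v $ i"
    by (simp add: w_def)
  have "\<bar>v $ i\<bar> < 1"
    using component_le_norm_cart[of v i] assms(4) by simp
  then have "2 \<le> norm w"
    using component_le_norm_cart[of w i] wi by simp
  moreover have "norm w \<le> 4"
    using norm_triangle_ineq[of "3 *\<^sub>R axis i 1" v] assms(4) by (simp add: w_def)
  ultimately have W: "4 \<le> W" "W \<le> 16"
    unfolding W_def using power_mono[of 2 "norm w" 2] power_mono[of "norm w" 4 2] by auto
  have "W\<^sup>2 \<le> 256"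
    using W power_mono[of W 16 2] by simp
  then have "\<alpha> * (W\<^sup>2 / 4) \<le> 64 * \<alpha>"
    using assms(1) by simp
  moreover have "\<alpha> * (V / 2) \<le> \<alpha> / 2" "2 * \<alpha> \<le> \<alpha> * (W / 2)" "0 \<le> \<alpha> * (V\<^sup>2 / 4)"
    using V W assms(1) by (simp_all add: mult_left_mono)
  moreover have "u * w $ i = u * v $ i + 3 * u"
    by (simp add: wi algebra_simps)
  ultimately have "Htilde_exponent \<alpha> u (v $ i) V - D \<le> Htilde_exponent \<alpha> u (w $ i) W"
    using assms V W unfolding Htilde_exponent_def right_diff_distrib by linarith
  then have "(Htilde_exponent \<alpha> u (v $ i) V - D) / D \<le> Htilde_exponent \<alpha> u (w $ i) W / D"
    using \<open>D > 0\<close> by (simp add: divide_right_mono)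
  then have "Htilde_exponent \<alpha> u (v $ i) V / D - 1 \<le> Htilde_exponent \<alpha> u (w $ i) W / D"
    using \<open>D > 0\<close> by (simp add: diff_divide_distrib)
  then show ?thesis
    by (simp add: Htilde_density_def V_def W_def w_def flip: exp_add)
qed

lemma Htilde_density_le_moment_pair:
  fixes i :: "'n::finite"
  assumes "\<alpha> > 0" "u \<ge> 0" "D \<ge> 8 + 65 * \<alpha>" and v: "norm v < 1"
  shows "Htilde_density \<alpha> i u D v \<le> Htilde_moment \<alpha> i u D v + Htilde_moment \<alpha> i u D (3 *\<^sub>R axis i 1 + v)"
proof -
  define w where "w = 3 *\<^sub>R axis i 1 + v"
  have "\<bar>v $ i\<bar> < 1"
    using component_le_norm_cart[of v i] v by simp
  then have "(v $ i)\<^sup>2 \<le> 1"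
    by (simp add: abs_square_le_1 less_imp_le)
  moreover have "(norm v)\<^sup>2 \<le> 1"
    using v by (simp add: power_le_one)
  ultimately have "(v $ i)\<^sup>2 * ((norm v)\<^sup>2 - 1) \<ge> -1"
    using mult_left_mono[of "-1" "(norm v)\<^sup>2 - 1" "(v $ i)\<^sup>2"] by simp
  then have moment_v: "- Htilde_density \<alpha> i u D v \<le> Htilde_moment \<alpha> i u D v"
    using mult_right_mono[OF _ Htilde_density_nonneg, of "-1"] by (simp add: Htilde_moment_def)
  have "2 \<le> w $ i"
    using \<open>\<bar>v $ i\<bar> < 1\<close> by (simp add: w_def)
  then have "4 \<le> (w $ i)\<^sup>2" "4 \<le> (norm w)\<^sup>2"
    using power_mono[of 2 "w $ i" 2] power_mono[of 2 "norm w" 2] component_le_norm_cart[of w i] by auto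
  then have "12 \<le> (w $ i)\<^sup>2 * ((norm w)\<^sup>2 - 1)"
    using mult_mono[of 4 "(w $ i)\<^sup>2" 3 "(norm w)\<^sup>2 - 1"] by simp
  moreover have "Htilde_density \<alpha> i u D v / 3 \<le> Htilde_density \<alpha> i u D w"
  proof -
    have "1 / 3 \<le> exp (-1 :: real)"
      using exp_le by (simp add: exp_minus field_simps)
    then have "Htilde_density \<alpha> i u D v / 3 \<le> exp (-1) * Htilde_density \<alpha> i u D v"
      using mult_right_mono[of "1 / 3" "exp (-1)" "Htilde_density \<alpha> i u D v"] by simp
    also have "\<dots> \<le> Htilde_density \<alpha> i u D w"
      unfolding w_def using assms by (rule Htilde_density_translate_ge)
    finally show ?thesis .
  qed
  ultimately have "12 * (Htilde_density \<alpha> i u D v / 3) \<le> Htilde_moment \<alpha> i u D w"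
    unfolding Htilde_moment_def by (intro mult_mono) simp_all
  then show ?thesis
    using moment_v Htilde_density_nonneg[of \<alpha> i u D v] unfolding w_def by linarith
qed

lemma integral_Htilde_moment_pos:
  fixes i :: "'n::finite"
  assumes "\<alpha> > 0" "u \<ge> 0" "D \<ge> 8 + 65 * \<alpha>"
  shows "0 < (\<integral>v. Htilde_moment \<alpha> i u D v \<partial>lborel)"
proof -
  have "D > 0"
    using assms by simp
  have moment_int: "integrable lborel (Htilde_moment \<alpha> i u D)"
    by (rule integrable_bounded_by_Htilde_density[OF \<open>\<alpha> > 0\<close> \<open>D > 0\<close> _ abs_Htilde_moment_le])
       (unfold Htilde_moment_def[abs_def], intro borel_measurable_continuous_onI continuous_intros)
  have density_int: "integrable lborel (Htilde_density \<alpha> i u D)"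
    by (rule integrable_bounded_by_Htilde_density[OF \<open>\<alpha> > 0\<close> \<open>D > 0\<close>, where K=1 and k=0 and u=u and i=i])
       (simp_all add: borel_measurable_continuous_onI continuous_Htilde_density)
  have "0 < (\<integral>v. Htilde_density \<alpha> i u D v * indicator (ball 0 1) v \<partial>lborel)"
    by (rule integral_mult_indicator_ball_pos[OF density_int]) simp_all
  also have "\<dots> \<le> (\<integral>v. Htilde_moment \<alpha> i u D v \<partial>lborel)"
  proof (rule integral_ball_le_by_translate[OF moment_int density_int, where c="3 *\<^sub>R axis i 1"])
    show "2 * 1 \<le> norm (3 *\<^sub>R axis i 1 :: real^'n)"
      by simp
    show "0 \<le> Htilde_moment \<alpha> i u D v" if "v \<notin> ball 0 1" for v
      using that by (simp add: Htilde_moment_def one_le_power)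
    show "Htilde_density \<alpha> i u D v \<le> Htilde_moment \<alpha> i u D v + Htilde_moment \<alpha> i u D (3 *\<^sub>R axis i 1 + v)"
      if "v \<in> ball 0 1" for v
      using that by (intro Htilde_density_le_moment_pair[OF assms]) simp
  qed
  finally show ?thesis .
qed

theorem lemma2p3:
  fixes \<alpha> :: real and i :: "'n::finite"
  assumes "\<alpha> > 0"
  shows "\<exists>D0>0. \<forall>u>0. \<forall>D\<ge>D0. \<exists>H'.
           ((\<lambda>w. Htilde \<alpha> i w D) has_real_derivative H') (at u) \<and> H' < 0"
proof (rule exI[of _ "8 + 65 * \<alpha>"], intro conjI allI impI)
  show "8 + 65 * \<alpha> > 0"
    using assms by simp
  fix u D :: real
  assume "u > 0" and D: "D \<ge> 8 + 65 * \<alpha>"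
  then have "D > 0"
    using assms by simp
  have "0 < (\<integral>v. Htilde_moment \<alpha> i u D v \<partial>lborel)"
    using assms \<open>u > 0\<close> D by (intro integral_Htilde_moment_pos) simp_all
  then have "- (\<alpha> / D) * (\<integral>v. Htilde_moment \<alpha> i u D v \<partial>lborel) < 0"
    using assms \<open>D > 0\<close> by simp
  then show "\<exists>H'. ((\<lambda>w. Htilde \<alpha> i w D) has_real_derivative H') (at u) \<and> H' < 0"
    using has_real_derivative_Htilde_moment[OF assms \<open>D > 0\<close>] by blast
qed

end
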